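(* Let $R=R_1\times\cdots\times R_n$ be a direct product of finite commutative local rings with identity, with $n\geq 4$, and let $I=I_1\times\cdots\times I_n$ where $I_i$ is a proper ideal of $R_i$ for every $i=1,\dots,n$. Then $\Gamma''_I(R)$ is not planar.
   Context: The product has componentwise operations. For a commutative ring $R$ and an ideal $I$ of $R$, $\Gamma''_I(R)$ is the simple undirected graph whose vertex set is $\{x\in R\setminus I : xR+I\neq R\}$, with distinct vertices $x,y$ adjacent if and only if $x\notin yR+I$ and $y\notin xR+I$. A graph is planar if it can be drawn in the plane with edges meeting only at their endpoints. *)

theory Defs
  imports "HOL-Analysis.Analysis" "HOL-Algebra.Algebra"
begin

text \<open>A simple undirected graph is given by a vertex set V and a symmetric,
irreflexive adjacency relation E (only its restriction to V matters).\<close>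

definition planar_graph :: "'v set \<Rightarrow> ('v \<Rightarrow> 'v \<Rightarrow> bool) \<Rightarrow> bool" where
  "planar_graph V E \<longleftrightarrow>
     (\<exists>(p :: 'v \<Rightarrow> complex) (c :: 'v \<Rightarrow> 'v \<Rightarrow> real \<Rightarrow> complex).
        inj_on p V \<and>
        (\<forall>u\<in>V. \<forall>v\<in>V. E u v \<longrightarrow>
            arc (c u v) \<and> pathstart (c u v) = p u \<and> pathfinish (c u v) = p v \<and>
            path_image (c u v) \<inter> p ` V = {p u, p v}) \<and>
        (\<forall>u\<in>V. \<forall>v\<in>V. \<forall>x\<in>V. \<forall>y\<in>V. E u v \<and> E x y \<and> {u, v} \<noteq> {x, y} \<longrightarrow>
            path_image (c u v) \<inter> path_image (c x y) \<subseteq> {p u, p v} \<inter> {p x, p y}))"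

definition local_ring :: "('a, 'b) ring_scheme \<Rightarrow> bool" where
  "local_ring R \<longleftrightarrow> cring R \<and> (\<exists>!M. maximalideal M R)"

text \<open>The direct product R_0 x ... x R_(n-1) with componentwise operations;
elements are functions on {..<n} (extensional outside).\<close>

definition prod_carrier :: "(nat \<Rightarrow> ('a, 'b) ring_scheme) \<Rightarrow> nat \<Rightarrow> (nat \<Rightarrow> 'a) set" where
  "prod_carrier R n = (\<Pi>\<^sub>E i\<in>{..<n}. carrier (R i))"

definition prod_set :: "(nat \<Rightarrow> 'a set) \<Rightarrow> nat \<Rightarrow> (nat \<Rightarrow> 'a) set" where
  "prod_set I n = (\<Pi>\<^sub>E i\<in>{..<n}. I i)"

definition prod_principal_plus ::
  "(nat \<Rightarrow> ('a, 'b) ring_scheme) \<Rightarrow> nat \<Rightarrow> (nat \<Rightarrow> 'a set) \<Rightarrow> (nat \<Rightarrow> 'a) \<Rightarrow> (nat \<Rightarrow> 'a) set" where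
  "prod_principal_plus R n I x =
     {y \<in> prod_carrier R n. \<exists>r\<in>prod_carrier R n. \<exists>a\<in>prod_set I n.
        \<forall>i<n. y i = (x i \<otimes>\<^bsub>R i\<^esub> r i) \<oplus>\<^bsub>R i\<^esub> a i}"

definition gamma2_vertices ::
  "(nat \<Rightarrow> ('a, 'b) ring_scheme) \<Rightarrow> nat \<Rightarrow> (nat \<Rightarrow> 'a set) \<Rightarrow> (nat \<Rightarrow> 'a) set" where
  "gamma2_vertices R n I =
     {x \<in> prod_carrier R n - prod_set I n. prod_principal_plus R n I x \<noteq> prod_carrier R n}"

definition gamma2_adj ::
  "(nat \<Rightarrow> ('a, 'b) ring_scheme) \<Rightarrow> nat \<Rightarrow> (nat \<Rightarrow> 'a set) \<Rightarrow> (nat \<Rightarrow> 'a) \<Rightarrow> (nat \<Rightarrow> 'a) \<Rightarrow> bool" where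
  "gamma2_adj R n I x y \<longleftrightarrow>
     x \<noteq> y \<and> x \<notin> prod_principal_plus R n I y \<and> y \<notin> prod_principal_plus R n I x"

end

theory Submission
  imports Defs
begin

text \<open>
  For distinct two-element subsets S, T of {0, 1, 2, 3}, the 0-1 vectors e_S, e_T with supports
  S, T are vertices of Gamma''_I(R) and are adjacent: at a coordinate k in S - T, an equation
  e_S = e_T r + a with a in I would put 1 into I_k. Hence Gamma''_I(R) contains K(3,3) with parts
  {e_01, e_02, e_03} and {e_12, e_13, e_23}.

  K(3,3) is not planar. In a plane drawing with parts {a0, a1, a2} and {b0, b1, b2}, the hexagon
  a0 b0 a1 b1 a2 b2 is a Jordan curve and each diagonal a0 b1, a1 b2, a2 b0 runs inside or
  outside it. Any two of these diagonals interleave along the hexagon and therefore lie on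
  opposite sides, which is impossible for three diagonals and two sides. That two disjoint
  interleaving chords lie on opposite sides is proved for a theta graph (three arcs with common
  ends) from the Jordan curve theorem, the splitting of the inside of a theta graph by its middle
  arc, and Janiszewski's theorem.
\<close>

section \<open>Arcs and Jordan curves\<close>

definition arc_interior :: "(real \<Rightarrow> 'a::topological_space) \<Rightarrow> 'a set" where
  "arc_interior g = path_image g - {pathstart g, pathfinish g}"

lemma path_image_eq_arc_interior:
  "path_image g = arc_interior g \<union> {pathstart g, pathfinish g}"
  by (auto simp: arc_interior_def pathstart_in_path_image pathfinish_in_path_image)

lemma arc_interior_subset: "arc_interior g \<subseteq> path_image g"
  by (auto simp: arc_interior_def)

lemma connected_arc_interior: "arc g \<Longrightarrow> connected (arc_interior g)"
  by (simp add: arc_interior_def arc_imp_simple_path connected_simple_path_endless)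

lemma arc_interior_nonempty: "arc g \<Longrightarrow> arc_interior g \<noteq> {}"
  unfolding arc_interior_def by (intro nonempty_simple_path_endless arc_imp_simple_path)

lemma arc_ends_in_closure_arc_interior:
  assumes "arc g"
  shows "pathstart g \<in> closure (arc_interior g)" "pathfinish g \<in> closure (arc_interior g)"
proof -
  have "arc_interior g = g ` {0<..<1}"
    using assms by (simp add: arc_interior_def arc_imp_simple_path simple_path_endless)
  moreover have "continuous_on (closure {0<..<1::real}) g"
    using assms by (simp add: arc_def path_def)
  ultimately have "g ` closure {0<..<1} \<subseteq> closure (arc_interior g)"
    by (intro image_closure_subset) (auto simp: closure_subset)
  then show "pathstart g \<in> closure (arc_interior g)" "pathfinish g \<in> closure (arc_interior g)"
    by (auto simp: pathstart_def pathfinish_def)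
qed

lemma connected_subset_inside_or_outside:
  fixes S :: "'a::real_normed_vector set"
  assumes "closed S" "connected D" "D \<inter> S = {}"
  shows "D \<subseteq> inside S \<or> D \<subseteq> outside S"
  using connectedD[OF assms(2) open_inside[OF assms(1)] open_outside[OF assms(1)]] assms(3)
    inside_Int_outside[of S] inside_Un_outside[of S] by blast

lemma closure_Diff_subset_inside:
  fixes S :: "'a::real_normed_vector set"
  assumes "closed S" "D \<subseteq> inside S"
  shows "closure D - S \<subseteq> inside S"
  using closure_mono[OF assms(2)] closure_inside_subset[OF assms(1)] by blast

lemma closure_Diff_subset_outside:
  fixes S :: "'a::real_normed_vector set"
  assumes "closed S" "D \<subseteq> outside S"
  shows "closure D - S \<subseteq> outside S"
  using closure_mono[OF assms(2)] closure_outside_subset[OF assms(1)] by blast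

lemma Jordan_two_arcs:
  fixes g h :: "real \<Rightarrow> complex"
  assumes "arc g" "arc h" "pathstart h = pathstart g" "pathfinish h = pathfinish g"
    and "path_image g \<inter> path_image h = {pathstart g, pathfinish g}"
  shows "closed (path_image g \<union> path_image h)"
    and "inside (path_image g \<union> path_image h) \<noteq> {}"
    and "connected (inside (path_image g \<union> path_image h))"
    and "connected (outside (path_image g \<union> path_image h))"
    and "bounded (inside (path_image g \<union> path_image h))"
    and "frontier (inside (path_image g \<union> path_image h)) = path_image g \<union> path_image h"
proof -
  have "simple_path (g +++ reversepath h)"
    using assms by (subst simple_path_join_loop_eq) (auto simp: arc_reversepath)
  moreover have "pathfinish (g +++ reversepath h) = pathstart (g +++ reversepath h)"
    using assms by simp
  moreover have "path_image (g +++ reversepath h) = path_image g \<union> path_image h"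
    using assms by (simp add: path_image_join)
  ultimately show "inside (path_image g \<union> path_image h) \<noteq> {}"
    and "connected (inside (path_image g \<union> path_image h))"
    and "connected (outside (path_image g \<union> path_image h))"
    and "bounded (inside (path_image g \<union> path_image h))"
    and "frontier (inside (path_image g \<union> path_image h)) = path_image g \<union> path_image h"
    using Jordan_inside_outside by metis+
  show "closed (path_image g \<union> path_image h)"
    using assms by (simp add: closed_Un closed_path_image arc_imp_path)
qed

section \<open>Theta graphs\<close>

definition theta_arcs ::
  "(real \<Rightarrow> 'a::topological_space) \<Rightarrow> (real \<Rightarrow> 'a) \<Rightarrow> (real \<Rightarrow> 'a) \<Rightarrow> 'a \<Rightarrow> 'a \<Rightarrow> bool" where
  "theta_arcs g1 g2 g3 a b \<longleftrightarrow>
     (\<forall>g \<in> {g1, g2, g3}. arc g \<and> pathstart g = a \<and> pathfinish g = b) \<and>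
     path_image g1 \<inter> path_image g2 = {a, b} \<and> path_image g1 \<inter> path_image g3 = {a, b} \<and>
     path_image g2 \<inter> path_image g3 = {a, b}"

lemma theta_arcsI:
  assumes "arc g1" "arc g2" "arc g3"
    and "pathstart g1 = a" "pathfinish g1 = b" "pathstart g2 = a" "pathfinish g2 = b"
    and "pathstart g3 = a" "pathfinish g3 = b"
    and "path_image g1 \<inter> path_image g2 \<subseteq> {a, b}" "path_image g1 \<inter> path_image g3 \<subseteq> {a, b}"
    and "path_image g2 \<inter> path_image g3 \<subseteq> {a, b}"
  shows "theta_arcs g1 g2 g3 a b"
proof -
  have "{a, b} \<subseteq> path_image g" if "g \<in> {g1, g2, g3}" for g
    using that assms pathstart_in_path_image[of g] pathfinish_in_path_image[of g] by auto
  then show ?thesis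
    using assms unfolding theta_arcs_def by blast
qed

lemma theta_arcs_swap12: "theta_arcs g1 g2 g3 a b \<Longrightarrow> theta_arcs g2 g1 g3 a b"
  unfolding theta_arcs_def by blast

lemma theta_arcs_swap23: "theta_arcs g1 g2 g3 a b \<Longrightarrow> theta_arcs g1 g3 g2 a b"
  unfolding theta_arcs_def by blast

lemma theta_arcs_Jordan:
  fixes g1 g2 g3 :: "real \<Rightarrow> complex"
  assumes "theta_arcs g1 g2 g3 a b"
  shows "closed (path_image g1 \<union> path_image g2)"
    and "inside (path_image g1 \<union> path_image g2) \<noteq> {}"
    and "connected (inside (path_image g1 \<union> path_image g2))"
    and "connected (outside (path_image g1 \<union> path_image g2))"
    and "bounded (inside (path_image g1 \<union> path_image g2))"
    and "frontier (inside (path_image g1 \<union> path_image g2)) = path_image g1 \<union> path_image g2"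
  using Jordan_two_arcs[of g1 g2] assms by (simp_all add: theta_arcs_def)

lemma theta_arcs_arc_interior_disjoint:
  "theta_arcs g1 g2 g3 a b \<Longrightarrow> arc_interior g3 \<inter> (path_image g1 \<union> path_image g2) = {}"
  unfolding theta_arcs_def arc_interior_def by auto

lemma theta_arcs_arc_interior_side:
  fixes g1 g2 g3 :: "real \<Rightarrow> complex"
  assumes "theta_arcs g1 g2 g3 a b"
  shows "arc_interior g3 \<subseteq> inside (path_image g1 \<union> path_image g2) \<or>
         arc_interior g3 \<subseteq> outside (path_image g1 \<union> path_image g2)"
  using assms connected_subset_inside_or_outside theta_arcs_Jordan(1) connected_arc_interior
    theta_arcs_arc_interior_disjoint by (metis insertCI theta_arcs_def)

lemma theta_arcs_inside_subset_outside:
  fixes g1 g2 g3 :: "real \<Rightarrow> complex"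
  assumes theta: "theta_arcs g1 g2 g3 a b"
    and out2: "arc_interior g2 \<subseteq> outside (path_image g1 \<union> path_image g3)"
    and out3: "arc_interior g3 \<subseteq> outside (path_image g1 \<union> path_image g2)"
  shows "inside (path_image g1 \<union> path_image g2) \<subseteq> outside (path_image g1 \<union> path_image g3)"
proof -
  let ?C12 = "path_image g1 \<union> path_image g2" and ?C13 = "path_image g1 \<union> path_image g3"
  note J12 = theta_arcs_Jordan[OF theta]
  note J13 = theta_arcs_Jordan[OF theta_arcs_swap23[OF theta]]
  have "path_image g3 \<subseteq> outside ?C12 \<union> ?C12"
    using out3 theta path_image_eq_arc_interior[of g3] by (auto simp: theta_arcs_def)
  then have "inside ?C12 \<inter> ?C13 = {}"
    using inside_Int_outside[of ?C12] inside_no_overlap[of ?C12] by blast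
  with connected_subset_inside_or_outside[OF J13(1) J12(3)]
  consider "inside ?C12 \<subseteq> inside ?C13" | "inside ?C12 \<subseteq> outside ?C13"
    by blast
  then show ?thesis
  proof cases
    case 1
    have "arc_interior g2 \<subseteq> closure (inside ?C12) - ?C13"
      using J12(6) theta_arcs_arc_interior_disjoint[OF theta_arcs_swap23[OF theta]]
      by (auto simp: frontier_def arc_interior_def)
    also have "\<dots> \<subseteq> inside ?C13"
      by (rule closure_Diff_subset_inside[OF J13(1) 1])
    finally have "arc_interior g2 = {}"
      using out2 inside_Int_outside[of ?C13] by blast
    then show ?thesis
      using arc_interior_nonempty theta by (auto simp: theta_arcs_def)
  qed
qed

text \<open>This is where Janiszewski's theorem enters: two closed discs meeting in an arc do not
  separate the plane.\<close>

lemma theta_arcs_connected_outside_Int: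
  fixes g1 g2 g3 :: "real \<Rightarrow> complex"
  assumes theta: "theta_arcs g1 g2 g3 a b"
    and in12: "inside (path_image g1 \<union> path_image g2) \<subseteq> outside (path_image g1 \<union> path_image g3)"
    and in13: "inside (path_image g1 \<union> path_image g3) \<subseteq> outside (path_image g1 \<union> path_image g2)"
  shows "connected (outside (path_image g1 \<union> path_image g2) \<inter> outside (path_image g1 \<union> path_image g3))"
proof -
  define C12 where "C12 = path_image g1 \<union> path_image g2"
  define C13 where "C13 = path_image g1 \<union> path_image g3"
  note J12 = theta_arcs_Jordan[OF theta, folded C12_def]
  note J13 = theta_arcs_Jordan[OF theta_arcs_swap23[OF theta], folded C13_def]
  define S where "S = closure (inside C12)"
  define T where "T = closure (inside C13)"
  have S: "S = inside C12 \<union> C12" and T: "T = inside C13 \<union> C13"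
    using J12(6) J13(6) by (simp_all add: S_def T_def closure_Un_frontier)
  have "C12 \<inter> C13 = path_image g1"
    using theta by (auto simp: C12_def C13_def theta_arcs_def)
  moreover have "inside C12 \<inter> T = {}" "inside C13 \<inter> C12 = {}"
    using in12[folded C12_def C13_def] in13[folded C12_def C13_def] inside_Int_outside[of C13]
      outside_no_overlap[of C12] outside_no_overlap[of C13]
    unfolding T by blast+
  ultimately have "S \<inter> T = path_image g1"
    unfolding S T by blast
  moreover have "- S = outside C12" "- T = outside C13"
    unfolding S T by (simp_all add: outside_inside sup_commute)
  moreover have "connected (path_image g1)"
    using theta by (simp add: theta_arcs_def connected_path_image arc_imp_path)
  moreover have "compact S"
    using J12(5) by (simp add: S_def compact_closure)
  ultimately show ?thesis
    using Janiszewski_connected[of S T] J12(4) J13(4) by (simp add: T_def C12_def C13_def)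
qed

lemma theta_arcs_insides_not_pairwise_exterior:
  fixes g1 g2 g3 :: "real \<Rightarrow> complex"
  assumes theta: "theta_arcs g1 g2 g3 a b"
    and in12: "inside (path_image g1 \<union> path_image g2) \<subseteq> outside (path_image g1 \<union> path_image g3)"
    and in13: "inside (path_image g1 \<union> path_image g3) \<subseteq> outside (path_image g1 \<union> path_image g2)"
    and in23: "inside (path_image g2 \<union> path_image g3) \<subseteq>
                 outside (path_image g1 \<union> path_image g2) \<inter> outside (path_image g1 \<union> path_image g3)"
  shows False
proof -
  define C12 where "C12 = path_image g1 \<union> path_image g2"
  define C13 where "C13 = path_image g1 \<union> path_image g3"
  define C23 where "C23 = path_image g2 \<union> path_image g3"
  define W where "W = outside C12 \<inter> outside C13"
  note J12 = theta_arcs_Jordan[OF theta, folded C12_def]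
  note J13 = theta_arcs_Jordan[OF theta_arcs_swap23[OF theta], folded C13_def]
  note J23 = theta_arcs_Jordan[OF theta_arcs_swap23[OF theta_arcs_swap12[OF theta]], folded C23_def]
  have "connected W"
    using theta_arcs_connected_outside_Int[OF theta in12 in13] by (simp add: W_def C12_def C13_def)
  have "C23 \<inter> W = {}"
    using outside_no_overlap[of C12] outside_no_overlap[of C13]
    unfolding W_def C12_def C13_def C23_def by blast
  then have cover: "W \<subseteq> inside C23 \<union> outside C23"
    by auto
  have "inside C23 \<subseteq> W"
    using in23 by (simp add: W_def C12_def C13_def C23_def)
  then have "inside C23 \<inter> W \<noteq> {}"
    using J23(2) by blast
  with connectedD[OF \<open>connected W\<close> open_inside[OF J23(1)] open_outside[OF J23(1)] _ cover]
  have "outside C23 \<inter> W = {}"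
    using inside_Int_outside[of C23] by blast
  with cover have "bounded W"
    using bounded_subset[OF J23(5)] by blast
  moreover have "- W = closure (inside C12) \<union> closure (inside C13)"
    using J12(6) J13(6) by (simp add: W_def closure_Un_frontier outside_inside sup_commute)
  then have "bounded (- W)"
    using J12(5) J13(5) by (simp add: bounded_closure)
  ultimately have "bounded (W \<union> - W)"
    by (simp only: bounded_Un)
  then show False
    by (simp only: Compl_partition not_bounded_UNIV)
qed

lemma theta_arcs_inner_arc:
  fixes g1 g2 g3 :: "real \<Rightarrow> complex"
  assumes theta: "theta_arcs g1 g2 g3 a b"
  shows "arc_interior g3 \<subseteq> inside (path_image g1 \<union> path_image g2) \<or>
         arc_interior g2 \<subseteq> inside (path_image g1 \<union> path_image g3) \<or>
         arc_interior g1 \<subseteq> inside (path_image g2 \<union> path_image g3)"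
proof (rule ccontr)
  assume "\<not> ?thesis"
  moreover note theta_arcs_arc_interior_side[OF theta]
    theta_arcs_arc_interior_side[OF theta_arcs_swap23[OF theta]]
    theta_arcs_arc_interior_side[OF theta_arcs_swap23[OF theta_arcs_swap12[OF theta]]]
  ultimately have out3: "arc_interior g3 \<subseteq> outside (path_image g1 \<union> path_image g2)"
    and out2: "arc_interior g2 \<subseteq> outside (path_image g1 \<union> path_image g3)"
    and out1: "arc_interior g1 \<subseteq> outside (path_image g2 \<union> path_image g3)"
    by blast+
  have th231: "theta_arcs g2 g3 g1 a b" and th321: "theta_arcs g3 g2 g1 a b"
    using theta theta_arcs_swap12 theta_arcs_swap23 by blast+
  have "inside (path_image g2 \<union> path_image g3) \<subseteq> outside (path_image g1 \<union> path_image g2)"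
    using theta_arcs_inside_subset_outside[OF th231] out1 out3 by (simp add: Un_commute)
  moreover have "inside (path_image g2 \<union> path_image g3) \<subseteq> outside (path_image g1 \<union> path_image g3)"
    using theta_arcs_inside_subset_outside[OF th321] out1 out2 by (simp add: Un_commute)
  ultimately show False
    using theta_arcs_insides_not_pairwise_exterior[OF theta]
      theta_arcs_inside_subset_outside[OF theta out2 out3]
      theta_arcs_inside_subset_outside[OF theta_arcs_swap23[OF theta] out3 out2]
    by blast
qed

lemma theta_arcs_split_inside:
  fixes g1 g2 g3 :: "real \<Rightarrow> complex"
  assumes theta: "theta_arcs g1 g2 g3 a b"
    and inner: "arc_interior g3 \<subseteq> inside (path_image g1 \<union> path_image g2)"
  shows "inside (path_image g1 \<union> path_image g3) \<inter> inside (path_image g2 \<union> path_image g3) = {}"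
    and "inside (path_image g1 \<union> path_image g3) \<union> inside (path_image g2 \<union> path_image g3) \<union>
           arc_interior g3 = inside (path_image g1 \<union> path_image g2)"
proof -
  from theta have arcs: "arc g1" "arc g2" "arc g3"
    and ends: "pathstart g1 = a" "pathfinish g1 = b" "pathstart g2 = a" "pathfinish g2 = b"
      "pathstart g3 = a" "pathfinish g3 = b"
    and meet: "path_image g1 \<inter> path_image g2 = {a, b}" "path_image g1 \<inter> path_image g3 = {a, b}"
      "path_image g2 \<inter> path_image g3 = {a, b}"
    by (simp_all add: theta_arcs_def)
  have "a \<noteq> b"
    using arc_distinct_ends[OF arcs(1)] ends by simp
  have "arc_interior g3 \<subseteq> path_image g3 \<inter> inside (path_image g1 \<union> path_image g2)"
    using inner arc_interior_subset by blast
  then have "path_image g3 \<inter> inside (path_image g1 \<union> path_image g2) \<noteq> {}"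
    using arc_interior_nonempty[OF arcs(3)] by blast
  then obtain disj: "inside (path_image g1 \<union> path_image g3) \<inter> inside (path_image g2 \<union> path_image g3) = {}"
    and union: "inside (path_image g1 \<union> path_image g3) \<union> inside (path_image g2 \<union> path_image g3) \<union>
                  (path_image g3 - {a, b}) = inside (path_image g1 \<union> path_image g2)"
    by (rule split_inside_simple_closed_curve[OF arc_imp_simple_path[OF arcs(1)] ends(1,2)
          arc_imp_simple_path[OF arcs(2)] ends(3,4) arc_imp_simple_path[OF arcs(3)] ends(5,6)
          \<open>a \<noteq> b\<close> meet])
  show "inside (path_image g1 \<union> path_image g3) \<inter> inside (path_image g2 \<union> path_image g3) = {}"
    by (rule disj)
  show "inside (path_image g1 \<union> path_image g3) \<union> inside (path_image g2 \<union> path_image g3) \<union>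
          arc_interior g3 = inside (path_image g1 \<union> path_image g2)"
    using union ends(5,6) by (simp add: arc_interior_def)
qed

lemma theta_arcs_not_both_inside:
  fixes g1 g2 g3 :: "real \<Rightarrow> complex"
  assumes theta: "theta_arcs g1 g2 g3 a b"
    and inner: "arc_interior g3 \<subseteq> inside (path_image g1 \<union> path_image g2)"
    and D: "connected D" "D \<subseteq> inside (path_image g1 \<union> path_image g2)" "D \<inter> path_image g3 = {}"
    and x: "x \<in> closure D" "x \<in> arc_interior g1"
    and y: "y \<in> closure D" "y \<in> arc_interior g2"
  shows False
proof -
  define C12 where "C12 = path_image g1 \<union> path_image g2"
  define C13 where "C13 = path_image g1 \<union> path_image g3"
  define C23 where "C23 = path_image g2 \<union> path_image g3"
  note theta132 = theta_arcs_swap23[OF theta]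
  note theta231 = theta_arcs_swap23[OF theta_arcs_swap12[OF theta]]
  note split = theta_arcs_split_inside[OF theta inner, folded C12_def C13_def C23_def]
  note closed13 = theta_arcs_Jordan(1)[OF theta132, folded C13_def]
  note closed23 = theta_arcs_Jordan(1)[OF theta231, folded C23_def]
  have "D \<subseteq> inside C13 \<union> inside C23"
    using D(2,3) split(2) arc_interior_subset[of g3] unfolding C12_def[symmetric] by blast
  with connectedD[OF D(1) open_inside[OF closed13] open_inside[OF closed23]] split(1)
  consider "D \<subseteq> inside C13" | "D \<subseteq> inside C23"
    by blast
  then show False
  proof cases
    case 1
    have "y \<notin> C13"
      using y(2) theta_arcs_arc_interior_disjoint[OF theta132] unfolding C13_def by blast
    then have "y \<in> inside C12"
      using closure_Diff_subset_inside[OF closed13 1] y(1) split(2) by blast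
    moreover have "y \<in> C12"
      using y(2) arc_interior_subset[of g2] unfolding C12_def by blast
    ultimately show False
      using inside_no_overlap[of C12] by blast
  next
    case 2
    have "x \<notin> C23"
      using x(2) theta_arcs_arc_interior_disjoint[OF theta231] unfolding C23_def by blast
    then have "x \<in> inside C12"
      using closure_Diff_subset_inside[OF closed23 2] x(1) split(2) by blast
    moreover have "x \<in> C12"
      using x(2) arc_interior_subset[of g1] unfolding C12_def by blast
    ultimately show False
      using inside_no_overlap[of C12] by blast
  qed
qed

lemma theta_arcs_outside_chord_absurd:
  fixes g1 g2 g3 :: "real \<Rightarrow> complex"
  assumes theta: "theta_arcs g1 g2 g3 a b"
    and inner: "arc_interior g2 \<subseteq> inside (path_image g1 \<union> path_image g3)"
    and D: "connected D" "D \<subseteq> outside (path_image g1 \<union> path_image g2)" "D \<inter> path_image g3 = {}"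
    and x: "x \<in> closure D" "x \<in> arc_interior g1"
    and y: "y \<in> closure D" "y \<in> arc_interior g2"
  shows False
proof -
  define C12 where "C12 = path_image g1 \<union> path_image g2"
  define C13 where "C13 = path_image g1 \<union> path_image g3"
  define C32 where "C32 = path_image g3 \<union> path_image g2"
  note theta132 = theta_arcs_swap23[OF theta]
  note theta321 = theta_arcs_swap12[OF theta_arcs_swap23[OF theta_arcs_swap12[OF theta]]]
  note split = theta_arcs_split_inside[OF theta132 inner, folded C12_def C13_def C32_def]
  note closed13 = theta_arcs_Jordan(1)[OF theta132, folded C13_def]
  note closed32 = theta_arcs_Jordan(1)[OF theta321, folded C32_def]
  have D12: "D \<inter> C12 = {}"
    using D(2) outside_no_overlap[of C12] unfolding C12_def[symmetric] by blast
  then have D2: "D \<inter> path_image g2 = {}"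
    unfolding C12_def by blast
  have "D \<inter> C13 = {}"
    using D12 D(3) unfolding C12_def C13_def by blast
  with connected_subset_inside_or_outside[OF closed13 D(1)]
  consider "D \<subseteq> inside C13" | "D \<subseteq> outside C13"
    by blast
  then show False
  proof cases
    case 1
    have "D \<inter> inside C12 = {}"
      using D(2) inside_Int_outside[of C12] unfolding C12_def[symmetric] by blast
    then have "D \<subseteq> inside C32"
      using 1 D2 split(2) arc_interior_subset[of g2] by blast
    moreover have "x \<notin> C32"
      using x(2) theta_arcs_arc_interior_disjoint[OF theta321] unfolding C32_def by blast
    ultimately have "x \<in> inside C13"
      using closure_Diff_subset_inside[OF closed32] x(1) split(2) by blast
    moreover have "x \<in> C13"
      using x(2) arc_interior_subset[of g1] unfolding C13_def by blast
    ultimately show False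
      using inside_no_overlap[of C13] by blast
  next
    case 2
    have "y \<notin> C13"
      using y(2) theta_arcs_arc_interior_disjoint[OF theta132] unfolding C13_def by blast
    then have "y \<in> outside C13"
      using closure_Diff_subset_outside[OF closed13 2] y(1) by blast
    moreover have "y \<in> inside C13"
      using y(2) inner unfolding C13_def by blast
    ultimately show False
      using inside_Int_outside[of C13] by blast
  qed
qed

lemma theta_arcs_not_both_outside:
  fixes g1 g2 g3 :: "real \<Rightarrow> complex"
  assumes theta: "theta_arcs g1 g2 g3 a b"
    and out3: "arc_interior g3 \<subseteq> outside (path_image g1 \<union> path_image g2)"
    and D: "connected D" "D \<subseteq> outside (path_image g1 \<union> path_image g2)" "D \<inter> path_image g3 = {}"
    and x: "x \<in> closure D" "x \<in> arc_interior g1"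
    and y: "y \<in> closure D" "y \<in> arc_interior g2"
  shows False
  using theta_arcs_inner_arc[OF theta]
proof (elim disjE)
  assume "arc_interior g3 \<subseteq> inside (path_image g1 \<union> path_image g2)"
  then have "arc_interior g3 = {}"
    using out3 inside_Int_outside by blast
  then show False
    using arc_interior_nonempty[of g3] theta by (auto simp: theta_arcs_def)
next
  assume "arc_interior g2 \<subseteq> inside (path_image g1 \<union> path_image g3)"
  then show False
    by (rule theta_arcs_outside_chord_absurd[OF theta _ D x y])
next
  assume "arc_interior g1 \<subseteq> inside (path_image g2 \<union> path_image g3)"
  moreover have "D \<subseteq> outside (path_image g2 \<union> path_image g1)"
    using D(2) by (simp add: sup_commute)
  ultimately show False
    by (rule theta_arcs_outside_chord_absurd[OF theta_arcs_swap12[OF theta] _ D(1) _ D(3) y x])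
qed

lemma theta_arcs_chord_opposite_sides:
  fixes g1 g2 g3 :: "real \<Rightarrow> complex"
  assumes theta: "theta_arcs g1 g2 g3 a b"
    and D: "connected D" "D \<inter> (path_image g1 \<union> path_image g2 \<union> path_image g3) = {}"
    and x: "x \<in> closure D" "x \<in> arc_interior g1"
    and y: "y \<in> closure D" "y \<in> arc_interior g2"
  shows "arc_interior g3 \<subseteq> inside (path_image g1 \<union> path_image g2) \<and>
           D \<subseteq> outside (path_image g1 \<union> path_image g2) \<or>
         arc_interior g3 \<subseteq> outside (path_image g1 \<union> path_image g2) \<and>
           D \<subseteq> inside (path_image g1 \<union> path_image g2)"
proof -
  have D12: "D \<inter> (path_image g1 \<union> path_image g2) = {}" and D3: "D \<inter> path_image g3 = {}"
    using D(2) by blast+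
  show ?thesis
    using theta_arcs_arc_interior_side[OF theta]
      connected_subset_inside_or_outside[OF theta_arcs_Jordan(1)[OF theta] D(1) D12]
      theta_arcs_not_both_inside[OF theta _ D(1) _ D3 x y]
      theta_arcs_not_both_outside[OF theta _ D(1) _ D3 x y]
    by blast
qed

section \<open>Plane drawings of K(3,3)\<close>

lemma arc_join3:
  fixes g1 g2 g3 :: "real \<Rightarrow> 'a::real_normed_vector"
  assumes "arc g1" "arc g2" "arc g3"
    and "pathfinish g1 = pathstart g2" "pathfinish g2 = pathstart g3"
    and "path_image g1 \<inter> path_image g2 \<subseteq> {pathstart g2}"
    and "path_image g2 \<inter> path_image g3 \<subseteq> {pathstart g3}"
    and "path_image g1 \<inter> path_image g3 = {}"
  shows "arc (g1 +++ g2 +++ g3)"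
    and "path_image (g1 +++ g2 +++ g3) = path_image g1 \<union> path_image g2 \<union> path_image g3"
proof -
  have arc23: "arc (g2 +++ g3)"
    using assms by (intro arc_join) auto
  have image23: "path_image (g2 +++ g3) = path_image g2 \<union> path_image g3"
    using assms by (simp add: path_image_join)
  show "arc (g1 +++ g2 +++ g3)"
    using assms arc23 image23 by (intro arc_join) auto
  show "path_image (g1 +++ g2 +++ g3) = path_image g1 \<union> path_image g2 \<union> path_image g3"
    using assms image23 by (simp add: path_image_join Un_assoc)
qed

definition plane_drawing ::
  "'v set \<Rightarrow> ('v \<Rightarrow> 'v \<Rightarrow> bool) \<Rightarrow> ('v \<Rightarrow> complex) \<Rightarrow> ('v \<Rightarrow> 'v \<Rightarrow> real \<Rightarrow> complex) \<Rightarrow> bool" where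
  "plane_drawing V E p c \<longleftrightarrow>
     inj_on p V \<and>
     (\<forall>u\<in>V. \<forall>v\<in>V. E u v \<longrightarrow>
         arc (c u v) \<and> pathstart (c u v) = p u \<and> pathfinish (c u v) = p v \<and>
         path_image (c u v) \<inter> p ` V = {p u, p v}) \<and>
     (\<forall>u\<in>V. \<forall>v\<in>V. \<forall>x\<in>V. \<forall>y\<in>V. E u v \<and> E x y \<and> {u, v} \<noteq> {x, y} \<longrightarrow>
         path_image (c u v) \<inter> path_image (c x y) \<subseteq> {p u, p v} \<inter> {p x, p y})"

lemma planar_graph_iff_plane_drawing: "planar_graph V E \<longleftrightarrow> (\<exists>p c. plane_drawing V E p c)"
  by (simp add: planar_graph_def plane_drawing_def)

lemma plane_drawing_inj: "plane_drawing V E p c \<Longrightarrow> inj_on p V"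
  by (simp add: plane_drawing_def)

lemma plane_drawing_edge_arc:
  assumes "plane_drawing V E p c" "u \<in> V" "v \<in> V" "E u v"
  shows "arc (c u v)" "pathstart (c u v) = p u" "pathfinish (c u v) = p v"
  using assms unfolding plane_drawing_def by blast+

lemma plane_drawing_edge_Int:
  assumes "plane_drawing V E p c"
    and F: "F \<subseteq> {(u, v). u \<in> V \<and> v \<in> V \<and> E u v}" and G: "G \<subseteq> {(u, v). u \<in> V \<and> v \<in> V \<and> E u v}"
    and FG: "\<And>u v x y. (u, v) \<in> F \<Longrightarrow> (x, y) \<in> G \<Longrightarrow> {u, v} \<noteq> {x, y}"
  shows "(\<Union>(u, v)\<in>F. path_image (c u v)) \<inter> (\<Union>(x, y)\<in>G. path_image (c x y)) \<subseteq>
           p ` (Field F \<inter> Field G)"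
proof
  fix z
  assume "z \<in> (\<Union>(u, v)\<in>F. path_image (c u v)) \<inter> (\<Union>(x, y)\<in>G. path_image (c x y))"
  then obtain u v x y where uv: "(u, v) \<in> F" and xy: "(x, y) \<in> G"
    and z: "z \<in> path_image (c u v) \<inter> path_image (c x y)"
    by blast
  have inj: "inj_on p V"
    and meet: "\<And>u v x y. \<lbrakk>u \<in> V; v \<in> V; x \<in> V; y \<in> V; E u v; E x y; {u, v} \<noteq> {x, y}\<rbrakk> \<Longrightarrow>
                 path_image (c u v) \<inter> path_image (c x y) \<subseteq> {p u, p v} \<inter> {p x, p y}"
    using assms(1) by (simp_all add: plane_drawing_def)
  have V: "u \<in> V" "v \<in> V" "x \<in> V" "y \<in> V" and "E u v" "E x y"
    using uv xy F G by auto
  with z meet FG[OF uv xy] have "z \<in> {p u, p v} \<inter> {p x, p y}"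
    by blast
  then obtain w where "w \<in> {u, v} \<inter> {x, y}" "z = p w"
    using inj V by (auto dest: inj_onD)
  moreover have "{u, v} \<subseteq> Field F" "{x, y} \<subseteq> Field G"
    using uv xy by (auto intro: FieldI1 FieldI2)
  ultimately show "z \<in> p ` (Field F \<inter> Field G)"
    by blast
qed

definition zigzag :: "('v \<Rightarrow> 'v \<Rightarrow> real \<Rightarrow> complex) \<Rightarrow> 'v \<Rightarrow> 'v \<Rightarrow> 'v \<Rightarrow> 'v \<Rightarrow> real \<Rightarrow> complex" where
  "zigzag c a b a' b' = c a b +++ reversepath (c a' b) +++ c a' b'"

definition hexagon_image ::
  "('v \<Rightarrow> 'v \<Rightarrow> real \<Rightarrow> complex) \<Rightarrow> 'v \<Rightarrow> 'v \<Rightarrow> 'v \<Rightarrow> 'v \<Rightarrow> 'v \<Rightarrow> 'v \<Rightarrow> complex set" where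
  "hexagon_image c a0 a1 a2 b0 b1 b2 =
     path_image (c a0 b0) \<union> path_image (c a1 b0) \<union> path_image (c a1 b1) \<union>
     path_image (c a2 b1) \<union> path_image (c a2 b2) \<union> path_image (c a0 b2)"

lemma hexagon_image_rotate: "hexagon_image c a0 a1 a2 b0 b1 b2 = hexagon_image c a1 a2 a0 b1 b2 b0"
  by (auto simp: hexagon_image_def)

locale K33_drawing =
  fixes V :: "'v set" and E :: "'v \<Rightarrow> 'v \<Rightarrow> bool"
    and p :: "'v \<Rightarrow> complex" and c :: "'v \<Rightarrow> 'v \<Rightarrow> real \<Rightarrow> complex"
    and a0 a1 a2 b0 b1 b2 :: 'v
  assumes drawing: "plane_drawing V E p c"
    and distinct: "distinct [a0, a1, a2, b0, b1, b2]"
    and vertices: "{a0, a1, a2, b0, b1, b2} \<subseteq> V"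
    and edges: "\<And>a b. a \<in> {a0, a1, a2} \<Longrightarrow> b \<in> {b0, b1, b2} \<Longrightarrow> E a b"
begin

lemma edge_arc:
  assumes "a \<in> {a0, a1, a2}" "b \<in> {b0, b1, b2}"
  shows "arc (c a b)" "pathstart (c a b) = p a" "pathfinish (c a b) = p b"
  using plane_drawing_edge_arc[OF drawing _ _ edges[OF assms]] assms vertices by auto

lemma distinct_points: "distinct [p a0, p a1, p a2, p b0, p b1, p b2]"
  using distinct inj_on_subset[OF plane_drawing_inj[OF drawing] vertices]
  by (simp add: distinct_map[symmetric])

lemma edge_images_Int:
  assumes "F \<subseteq> {a0, a1, a2} \<times> {b0, b1, b2}" "G \<subseteq> {a0, a1, a2} \<times> {b0, b1, b2}" "F \<inter> G = {}"
  shows "(\<Union>(u, v)\<in>F. path_image (c u v)) \<inter> (\<Union>(x, y)\<in>G. path_image (c x y)) \<subseteq>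
           p ` (Field F \<inter> Field G)"
proof (rule plane_drawing_edge_Int[OF drawing])
  show "F \<subseteq> {(u, v). u \<in> V \<and> v \<in> V \<and> E u v}" "G \<subseteq> {(u, v). u \<in> V \<and> v \<in> V \<and> E u v}"
    using assms(1,2) vertices edges by auto
  define A where "A = {a0, a1, a2}"
  define B where "B = {b0, b1, b2}"
  have "A \<inter> B = {}"
    using distinct by (auto simp: A_def B_def)
  then show "{u, v} \<noteq> {x, y}" if "(u, v) \<in> F" "(x, y) \<in> G" for u v x y
    using that assms unfolding A_def[symmetric] B_def[symmetric] doubleton_eq_iff by blast
qed

lemma zigzag:
  assumes x: "x \<in> {a0, a1, a2}" "x' \<in> {a0, a1, a2}" "x \<noteq> x'"
    and y: "y \<in> {b0, b1, b2}" "y' \<in> {b0, b1, b2}" "y \<noteq> y'"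
  shows "arc (zigzag c x y x' y')" "pathstart (zigzag c x y x' y') = p x"
    "pathfinish (zigzag c x y x' y') = p y'"
    "path_image (zigzag c x y x' y') = path_image (c x y) \<union> path_image (c x' y) \<union> path_image (c x' y')"
proof -
  have "x \<noteq> y" "x' \<noteq> y" "x' \<noteq> y'"
    using x y distinct by auto
  have xy: "{(x, y)} \<subseteq> {a0, a1, a2} \<times> {b0, b1, b2}" "{(x', y)} \<subseteq> {a0, a1, a2} \<times> {b0, b1, b2}"
    "{(x', y')} \<subseteq> {a0, a1, a2} \<times> {b0, b1, b2}"
    using x y by blast+
  have "path_image (c x y) \<inter> path_image (c x' y) \<subseteq> p ` ({x, y} \<inter> {x', y})"
    using edge_images_Int[OF xy(1,2)] \<open>x \<noteq> x'\<close> by simp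
  also have "\<dots> \<subseteq> {p y}"
    using \<open>x \<noteq> x'\<close> \<open>x \<noteq> y\<close> by auto
  finally have "path_image (c x y) \<inter> path_image (c x' y) \<subseteq> {p y}" .
  moreover have "path_image (c x' y) \<inter> path_image (c x' y') \<subseteq> p ` ({x', y} \<inter> {x', y'})"
    using edge_images_Int[OF xy(2,3)] \<open>y \<noteq> y'\<close> by simp
  moreover have "{x', y} \<inter> {x', y'} \<subseteq> {x'}"
    using \<open>y \<noteq> y'\<close> \<open>x' \<noteq> y\<close> by auto
  moreover have "path_image (c x y) \<inter> path_image (c x' y') \<subseteq> p ` ({x, y} \<inter> {x', y'})"
    using edge_images_Int[OF xy(1,3)] \<open>x \<noteq> x'\<close> by simp
  moreover have "{x, y} \<inter> {x', y'} = {}"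
    using x y \<open>x \<noteq> x'\<close> \<open>y \<noteq> y'\<close> distinct by auto
  ultimately show "arc (zigzag c x y x' y')"
    "path_image (zigzag c x y x' y') = path_image (c x y) \<union> path_image (c x' y) \<union> path_image (c x' y')"
    using arc_join3[of "c x y" "reversepath (c x' y)" "c x' y'"] edge_arc[OF x(1) y(1)]
      edge_arc[OF x(2) y(1)] edge_arc[OF x(2) y(2)]
    by (auto simp: zigzag_def arc_reversepath)
  show "pathstart (zigzag c x y x' y') = p x" "pathfinish (zigzag c x y x' y') = p y'"
    using edge_arc[OF x(1) y(1)] edge_arc[OF x(2) y(2)] by (simp_all add: zigzag_def)
qed

lemma hexagon_theta: "theta_arcs (zigzag c a0 b0 a1 b1) (zigzag c a0 b2 a2 b1) (c a0 b1) (p a0) (p b1)"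
proof -
  let ?g1 = "zigzag c a0 b0 a1 b1" and ?g2 = "zigzag c a0 b2 a2 b1"
  define F1 where "F1 = {(a0, b0), (a1, b0), (a1, b1)}"
  define F2 where "F2 = {(a0, b2), (a2, b2), (a2, b1)}"
  have neq: "distinct [a0, a1, a2, b0, b1, b2]" "distinct [b2, b1, b0, a2, a1, a0]"
    using distinct by auto
  have g1: "arc ?g1" "pathstart ?g1 = p a0" "pathfinish ?g1 = p b1"
    "path_image ?g1 = (\<Union>(u, v)\<in>F1. path_image (c u v))"
    using zigzag[of a0 a1 b0 b1] neq by (simp_all add: F1_def Un_assoc)
  have g2: "arc ?g2" "pathstart ?g2 = p a0" "pathfinish ?g2 = p b1"
    "path_image ?g2 = (\<Union>(u, v)\<in>F2. path_image (c u v))"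
    using zigzag[of a0 a2 b2 b1] neq by (simp_all add: F2_def Un_assoc)
  have F: "F1 \<subseteq> {a0, a1, a2} \<times> {b0, b1, b2}" "F2 \<subseteq> {a0, a1, a2} \<times> {b0, b1, b2}"
    "{(a0, b1)} \<subseteq> {a0, a1, a2} \<times> {b0, b1, b2}"
    by (auto simp: F1_def F2_def)
  have "F1 \<inter> F2 = {}" "F1 \<inter> {(a0, b1)} = {}" "F2 \<inter> {(a0, b1)} = {}"
    using neq by (auto simp: F1_def F2_def)
  note Int12 = edge_images_Int[OF F(1,2) this(1)] and Int13 = edge_images_Int[OF F(1,3) this(2)]
    and Int23 = edge_images_Int[OF F(2,3) this(3)]
  have "Field F1 \<inter> Field F2 \<subseteq> {a0, b1}" "Field F1 \<inter> Field {(a0, b1)} \<subseteq> {a0, b1}"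
    "Field F2 \<inter> Field {(a0, b1)} \<subseteq> {a0, b1}"
    using neq by (auto simp: F1_def F2_def)
  from order_trans[OF Int12 image_mono[OF this(1)]] order_trans[OF Int13 image_mono[OF this(2)]]
    order_trans[OF Int23 image_mono[OF this(3)]]
  have "path_image ?g1 \<inter> path_image ?g2 \<subseteq> {p a0, p b1}"
    "path_image ?g1 \<inter> path_image (c a0 b1) \<subseteq> {p a0, p b1}"
    "path_image ?g2 \<inter> path_image (c a0 b1) \<subseteq> {p a0, p b1}"
    unfolding g1(4) g2(4) by simp_all
  then show ?thesis
    using g1 g2 edge_arc[of a0 b1] by (intro theta_arcsI) auto
qed

abbreviation hexagon :: "complex set" where
  "hexagon \<equiv> hexagon_image c a0 a1 a2 b0 b1 b2"

lemma hexagon_diagonals: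
  "arc_interior (c a0 b1) \<subseteq> inside hexagon \<and> arc_interior (c a1 b2) \<subseteq> outside hexagon \<or>
   arc_interior (c a0 b1) \<subseteq> outside hexagon \<and> arc_interior (c a1 b2) \<subseteq> inside hexagon"
proof -
  let ?g1 = "zigzag c a0 b0 a1 b1" and ?g2 = "zigzag c a0 b2 a2 b1" and ?D = "arc_interior (c a1 b2)"
  define F where "F = {(a0, b0), (a1, b0), (a1, b1), (a0, b2), (a2, b2), (a2, b1), (a0, b1)}"
  have neq: "distinct [a0, a1, a2, b0, b1, b2]" "distinct [b2, b1, b0, a2, a1, a0]"
    "distinct [p a0, p a1, p a2, p b0, p b1, p b2]" "distinct [p b2, p b1, p b0, p a2, p a1, p a0]"
    using distinct distinct_points by auto
  have g1: "pathstart ?g1 = p a0" "pathfinish ?g1 = p b1"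
    "path_image ?g1 = path_image (c a0 b0) \<union> path_image (c a1 b0) \<union> path_image (c a1 b1)"
    using zigzag[of a0 a1 b0 b1] neq by simp_all
  have g2: "pathstart ?g2 = p a0" "pathfinish ?g2 = p b1"
    "path_image ?g2 = path_image (c a0 b2) \<union> path_image (c a2 b2) \<union> path_image (c a2 b1)"
    using zigzag[of a0 a2 b2 b1] neq by simp_all
  have a1b2: "arc (c a1 b2)" "pathstart (c a1 b2) = p a1" "pathfinish (c a1 b2) = p b2"
    using edge_arc[of a1 b2] by simp_all
  have "F \<subseteq> {a0, a1, a2} \<times> {b0, b1, b2}" "{(a1, b2)} \<subseteq> {a0, a1, a2} \<times> {b0, b1, b2}"
    "{(a1, b2)} \<inter> F = {}"
    using neq by (auto simp: F_def)
  note Int = edge_images_Int[OF this(2,1,3)]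
  have "Field {(a1, b2)} \<inter> Field F \<subseteq> {a1, b2}"
    by auto
  from order_trans[OF Int image_mono[OF this]]
  have "path_image (c a1 b2) \<inter> (path_image ?g1 \<union> path_image ?g2 \<union> path_image (c a0 b1)) \<subseteq> {p a1, p b2}"
    unfolding g1(3) g2(3) by (simp add: F_def Un_ac)
  then have D: "?D \<inter> (path_image ?g1 \<union> path_image ?g2 \<union> path_image (c a0 b1)) = {}"
    using a1b2 by (auto simp: arc_interior_def)
  have x: "p a1 \<in> closure ?D" "p a1 \<in> arc_interior ?g1"
    using arc_ends_in_closure_arc_interior(1)[OF a1b2(1)] a1b2(2) edge_arc[of a1 b1]
      pathstart_in_path_image[of "c a1 b1"] neq g1
    by (auto simp: arc_interior_def)
  have y: "p b2 \<in> closure ?D" "p b2 \<in> arc_interior ?g2"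
    using arc_ends_in_closure_arc_interior(2)[OF a1b2(1)] a1b2(3) edge_arc[of a0 b2]
      pathfinish_in_path_image[of "c a0 b2"] neq g2
    by (auto simp: arc_interior_def)
  have "path_image ?g1 \<union> path_image ?g2 = hexagon"
    unfolding g1(3) g2(3) hexagon_image_def by blast
  with theta_arcs_chord_opposite_sides[OF hexagon_theta connected_arc_interior[OF a1b2(1)] D x y]
  show ?thesis
    by simp
qed

end

lemma K33_drawing_rotate:
  assumes "K33_drawing V E p c a0 a1 a2 b0 b1 b2"
  shows "K33_drawing V E p c a1 a2 a0 b1 b2 b0"
proof
  note K = assms[unfolded K33_drawing_def]
  show "plane_drawing V E p c"
    using K by blast
  show "distinct [a1, a2, a0, b1, b2, b0]" "{a1, a2, a0, b1, b2, b0} \<subseteq> V"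
    using K by auto
  show "E a b" if "a \<in> {a1, a2, a0}" "b \<in> {b1, b2, b0}" for a b
    using K that by blast
qed

lemma card_3_disjoint_pairE:
  assumes "card A = 3" "card B = 3" "A \<inter> B = {}"
  obtains a0 a1 a2 b0 b1 b2 where "A = {a0, a1, a2}" "B = {b0, b1, b2}"
    and "distinct [a0, a1, a2, b0, b1, b2]"
proof -
  obtain a0 a1 a2 where "A = {a0, a1, a2}" "a0 \<noteq> a1" "a1 \<noteq> a2" "a0 \<noteq> a2"
    using \<open>card A = 3\<close> by (auto simp: card_3_iff)
  moreover obtain b0 b1 b2 where "B = {b0, b1, b2}" "b0 \<noteq> b1" "b1 \<noteq> b2" "b0 \<noteq> b2"
    using \<open>card B = 3\<close> by (auto simp: card_3_iff)
  moreover have "distinct [a0, a1, a2, b0, b1, b2]"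
    using calculation \<open>A \<inter> B = {}\<close> by auto
  ultimately show thesis
    by (intro that)
qed

theorem K33_subgraph_not_planar_graph:
  assumes "card A = 3" "card B = 3" "A \<inter> B = {}" "A \<union> B \<subseteq> V"
    and "\<And>a b. a \<in> A \<Longrightarrow> b \<in> B \<Longrightarrow> E a b"
  shows "\<not> planar_graph V E"
proof
  assume "planar_graph V E"
  then obtain p c where "plane_drawing V E p c"
    by (auto simp: planar_graph_iff_plane_drawing)
  moreover obtain a0 a1 a2 b0 b1 b2 where "A = {a0, a1, a2}" "B = {b0, b1, b2}"
    and "distinct [a0, a1, a2, b0, b1, b2]"
    using card_3_disjoint_pairE[OF assms(1-3)] by blast
  ultimately have K: "K33_drawing V E p c a0 a1 a2 b0 b1 b2"
    using assms(4,5) by (intro K33_drawing.intro) auto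
  have separated: False
    if "S \<inter> T = {}" "D1 \<noteq> {}" "D2 \<noteq> {}" "D3 \<noteq> {}"
      and "D1 \<subseteq> S \<and> D2 \<subseteq> T \<or> D1 \<subseteq> T \<and> D2 \<subseteq> S" "D2 \<subseteq> S \<and> D3 \<subseteq> T \<or> D2 \<subseteq> T \<and> D3 \<subseteq> S"
      and "D3 \<subseteq> S \<and> D1 \<subseteq> T \<or> D3 \<subseteq> T \<and> D1 \<subseteq> S"
    for S T D1 D2 D3 :: "complex set"
    using that by blast
  have nonempty: "arc_interior (c u v) \<noteq> {}" if "u \<in> {a0, a1, a2}" "v \<in> {b0, b1, b2}" for u v
    using arc_interior_nonempty K33_drawing.edge_arc(1)[OF K that] by blast
  note K' = K33_drawing_rotate[OF K] and K'' = K33_drawing_rotate[OF K33_drawing_rotate[OF K]]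
  note rotate1 = hexagon_image_rotate[of c a0 a1 a2 b0 b1 b2, symmetric]
    and rotate2 = hexagon_image_rotate[of c a1 a2 a0 b1 b2 b0, symmetric]
  show False
  proof (rule separated)
    show "inside (hexagon_image c a0 a1 a2 b0 b1 b2) \<inter> outside (hexagon_image c a0 a1 a2 b0 b1 b2) = {}"
      by (rule inside_Int_outside)
    show "arc_interior (c a0 b1) \<noteq> {}" "arc_interior (c a1 b2) \<noteq> {}" "arc_interior (c a2 b0) \<noteq> {}"
      by (simp_all add: nonempty)
  qed (rule K33_drawing.hexagon_diagonals[OF K],
       rule K33_drawing.hexagon_diagonals[OF K', unfolded rotate1],
       rule K33_drawing.hexagon_diagonals[OF K'', unfolded rotate2 rotate1])
qed

section \<open>K(3,3) inside Gamma''_I(R)\<close>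

text \<open>The value \<open>undefined\<close> off \<open>{..<n}\<close> makes the vector an element of the extensional
  product \<open>prod_carrier R n\<close>.\<close>

definition prod_indicator :: "(nat \<Rightarrow> ('a, 'b) ring_scheme) \<Rightarrow> nat \<Rightarrow> nat set \<Rightarrow> nat \<Rightarrow> 'a" where
  "prod_indicator R n S = (\<lambda>i. if i < n then if i \<in> S then \<one>\<^bsub>R i\<^esub> else \<zero>\<^bsub>R i\<^esub> else undefined)"

locale proper_ideal_family =
  fixes R :: "nat \<Rightarrow> ('a, 'b) ring_scheme" and n :: nat and I :: "nat \<Rightarrow> 'a set"
  assumes ideal: "i < n \<Longrightarrow> ideal (I i) (R i)"
    and proper: "i < n \<Longrightarrow> I i \<noteq> carrier (R i)"
begin

lemma one_notin_ideal: "i < n \<Longrightarrow> \<one>\<^bsub>R i\<^esub> \<notin> I i"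
  using ideal proper ideal.one_imp_carrier by blast

lemma prod_indicator_in_carrier: "prod_indicator R n S \<in> prod_carrier R n"
  using ideal unfolding prod_carrier_def prod_indicator_def PiE_def
  by (auto simp: ideal_def ring.ring_simprules extensional_def)

lemma prod_indicator_notin_principal_plus:
  assumes "k < n" "k \<in> S" "k \<notin> T"
  shows "prod_indicator R n S \<notin> prod_principal_plus R n I (prod_indicator R n T)"
proof
  assume "prod_indicator R n S \<in> prod_principal_plus R n I (prod_indicator R n T)"
  then obtain r a where r: "r \<in> prod_carrier R n" and a: "a \<in> prod_set I n"
    and eq: "\<And>i. i < n \<Longrightarrow> prod_indicator R n S i = prod_indicator R n T i \<otimes>\<^bsub>R i\<^esub> r i \<oplus>\<^bsub>R i\<^esub> a i"
    unfolding prod_principal_plus_def by blast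
  interpret ideal "I k" "R k"
    using ideal \<open>k < n\<close> .
  have "r k \<in> carrier (R k)" "a k \<in> I k"
    using r a \<open>k < n\<close> by (auto simp: prod_carrier_def prod_set_def)
  moreover have "\<one>\<^bsub>R k\<^esub> = \<zero>\<^bsub>R k\<^esub> \<otimes>\<^bsub>R k\<^esub> r k \<oplus>\<^bsub>R k\<^esub> a k"
    using eq[OF \<open>k < n\<close>] assms by (simp add: prod_indicator_def)
  ultimately have "\<one>\<^bsub>R k\<^esub> = a k"
    by simp
  with \<open>a k \<in> I k\<close> one_notin_ideal[OF \<open>k < n\<close>] show False
    by simp
qed

lemma prod_indicator_vertex:
  assumes "S \<subseteq> {..<n}" "S \<noteq> {}" "S \<noteq> {..<n}"
  shows "prod_indicator R n S \<in> gamma2_vertices R n I"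
proof -
  obtain k j where "k \<in> S" "j < n" "j \<notin> S"
    using assms by blast
  then have "k < n"
    using assms(1) by blast
  have "prod_indicator R n S \<notin> prod_set I n"
  proof
    assume "prod_indicator R n S \<in> prod_set I n"
    then have "prod_indicator R n S k \<in> I k"
      using \<open>k < n\<close> by (auto simp: prod_set_def PiE_iff)
    then show False
      using \<open>k < n\<close> \<open>k \<in> S\<close> one_notin_ideal[OF \<open>k < n\<close>] by (simp add: prod_indicator_def)
  qed
  moreover have "prod_indicator R n UNIV \<notin> prod_principal_plus R n I (prod_indicator R n S)"
    using prod_indicator_notin_principal_plus \<open>j < n\<close> \<open>j \<notin> S\<close> by blast
  ultimately show ?thesis
    using prod_indicator_in_carrier unfolding gamma2_vertices_def by blast
qed

lemma prod_indicator_adj: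
  assumes "S \<subseteq> {..<n}" "T \<subseteq> {..<n}" "card S = card T" "S \<noteq> T"
  shows "gamma2_adj R n I (prod_indicator R n S) (prod_indicator R n T)"
proof -
  have "finite S" "finite T"
    using assms(1,2) finite_subset by auto
  then have "\<not> S \<subseteq> T" "\<not> T \<subseteq> S"
    using assms(3,4) card_subset_eq by metis+
  then obtain k j where k: "k \<in> S" "k \<notin> T" and j: "j \<in> T" "j \<notin> S"
    by blast
  then have "k < n" "j < n"
    using assms(1,2) by auto
  have "\<zero>\<^bsub>R k\<^esub> \<in> I k"
    using ideal[OF \<open>k < n\<close>] by (simp add: ideal_def additive_subgroup.zero_closed)
  then have "prod_indicator R n S k \<noteq> prod_indicator R n T k"
    using \<open>k < n\<close> k one_notin_ideal[OF \<open>k < n\<close>] by (auto simp: prod_indicator_def)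
  then show ?thesis
    using prod_indicator_notin_principal_plus \<open>k < n\<close> k \<open>j < n\<close> j
    unfolding gamma2_adj_def by metis
qed

lemma gamma2_contains_K33:
  assumes "n \<ge> 4"
  obtains A B where "card A = 3" "card B = 3" "A \<inter> B = {}" "A \<union> B \<subseteq> gamma2_vertices R n I"
    "\<And>a b. a \<in> A \<Longrightarrow> b \<in> B \<Longrightarrow> gamma2_adj R n I a b"
proof -
  let ?x = "prod_indicator R n"
  define SA :: "nat set set" where "SA = {{0, 1}, {0, 2}, {0, 3}}"
  define SB :: "nat set set" where "SB = {{1, 2}, {1, 3}, {2, 3}}"
  have small: "S \<subseteq> {..<n}" "card S = 2" if "S \<in> SA \<union> SB" for S
    using that \<open>n \<ge> 4\<close> by (auto simp: SA_def SB_def)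
  have "0 \<in> S" if "S \<in> SA" for S
    using that by (auto simp: SA_def)
  moreover have "0 \<notin> T" if "T \<in> SB" for T
    using that by (auto simp: SB_def)
  ultimately have "SA \<inter> SB = {}"
    by blast
  have adj: "gamma2_adj R n I (?x S) (?x T)" if "S \<in> SA \<union> SB" "T \<in> SA \<union> SB" "S \<noteq> T" for S T
    using small[OF that(1)] small[OF that(2)] that(3) by (simp add: prod_indicator_adj)
  have "inj_on ?x (SA \<union> SB)"
    using adj unfolding inj_on_def gamma2_adj_def by blast
  show ?thesis
  proof
    have "card (?x ` SA) = card SA" "card (?x ` SB) = card SB"
      using card_image[OF inj_on_subset[OF \<open>inj_on ?x (SA \<union> SB)\<close>]] by blast+
    moreover have "card SA = 3" "card SB = 3"
      by (simp_all add: SA_def SB_def doubleton_eq_iff)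
    ultimately show "card (?x ` SA) = 3" "card (?x ` SB) = 3"
      by simp_all
    show "?x ` SA \<inter> ?x ` SB = {}"
      using inj_on_image_Int[OF \<open>inj_on ?x (SA \<union> SB)\<close> Un_upper1 Un_upper2] \<open>SA \<inter> SB = {}\<close> by simp
    have "?x S \<in> gamma2_vertices R n I" if "S \<in> SA \<union> SB" for S
      using small[OF that] \<open>n \<ge> 4\<close> by (intro prod_indicator_vertex) auto
    then show "?x ` SA \<union> ?x ` SB \<subseteq> gamma2_vertices R n I"
      by blast
    show "gamma2_adj R n I a b" if "a \<in> ?x ` SA" "b \<in> ?x ` SB" for a b
      using that adj \<open>SA \<inter> SB = {}\<close> by blast
  qed
qed

end

theorem proposition3p5:
  fixes R :: "nat \<Rightarrow> ('a, 'b) ring_scheme" and I :: "nat \<Rightarrow> 'a set" and n :: nat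
  assumes "n \<ge> 4"
    and "\<And>i. i < n \<Longrightarrow> local_ring (R i)"
    and "\<And>i. i < n \<Longrightarrow> finite (carrier (R i))"
    and "\<And>i. i < n \<Longrightarrow> ideal (I i) (R i)"
    and "\<And>i. i < n \<Longrightarrow> I i \<noteq> carrier (R i)"
  shows "\<not> planar_graph (gamma2_vertices R n I) (gamma2_adj R n I)"
proof -
  interpret proper_ideal_family R n I
    using assms(4,5) by (rule proper_ideal_family.intro)
  obtain A B where "card A = 3" "card B = 3" "A \<inter> B = {}" "A \<union> B \<subseteq> gamma2_vertices R n I"
    "\<And>a b. a \<in> A \<Longrightarrow> b \<in> B \<Longrightarrow> gamma2_adj R n I a b"
    using gamma2_contains_K33[OF \<open>n \<ge> 4\<close>] by blast
  then show ?thesis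
    by (rule K33_subgraph_not_planar_graph)
qed

end
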